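(* Fix $\beta\in(0,1)$ and $r>\beta$. Consider the following normal model. Let $m=\lfloor n^{1-\beta}\rfloor$, and let $\mathscr{F}\subset[n]$ be a uniformly random subset of size $m$. Set $\mu_i=\sqrt{2r\log n}$ for $i\in\mathscr{F}$ and $\mu_i=0$ otherwise. Let $X_i\sim\mathcal{N}(\mu_i,1)$ be independent. Let $q=q_n\in(0,1)$ satisfy $q_n\to0$ and $n^a q_n\to\infty$ for every fixed $a>0$. Then the Barber–Candès procedure at level $q_n$ has risk $\mathrm{FDR}+\mathrm{FNR}$ tending to $0$ as $n\to\infty$.
   Context: For a rejection set $\mathscr{R}$: - $\mathrm{FDP}(\mathscr{R})=|\mathscr{R}\setminus\mathscr{F}|/|\mathscr{R}|$, - $\mathrm{FNP}(\mathscr{R})=|\mathscr{F}\setminus\mathscr{R}|/|\mathscr{F}|$, with $0/0=0$. $\mathrm{FDR}$ and $\mathrm{FNR}$ are the expectations of $\mathrm{FDP}$ and $\mathrm{FNP}$. BC procedure at level $q$: for $t\in\mathbb{R}$, define $$\widehat{\mathrm{FDP}}(t)=\frac{1+\#\{i:X_i\le -t\}}{1\vee\#\{i:X_i\ge t\}}.$$ Set $\tau_{\rm BC}=\inf\{t\in\{|X_1|,\dots,|X_n|\}:\widehat{\mathrm{FDP}}(t)\le q\}$, with $\inf\emptyset=+\infty$. The procedure rejects $\{i:X_i\ge\tau_{\rm BC}\}$. *)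

theory Defs
  imports "HOL-Probability.Probability"
begin

text \<open>Coordinates are indexed by the set {..<n} (standing for [n]).\<close>

definition FDP :: "nat set \<Rightarrow> nat set \<Rightarrow> real" where
  "FDP R F = real (card (R - F)) / real (card R)"

definition FNP :: "nat set \<Rightarrow> nat set \<Rightarrow> real" where
  "FNP R F = real (card (F - R)) / real (card F)"

definition FDP_hat :: "nat \<Rightarrow> (nat \<Rightarrow> real) \<Rightarrow> real \<Rightarrow> real" where
  "FDP_hat n X t = (1 + real (card {i \<in> {..<n}. X i \<le> - t}))
                    / max 1 (real (card {i \<in> {..<n}. X i \<ge> t}))"

definition BC_thresholds :: "nat \<Rightarrow> real \<Rightarrow> (nat \<Rightarrow> real) \<Rightarrow> real set" where
  "BC_thresholds n q X = {t \<in> (\<lambda>i. \<bar>X i\<bar>) ` {..<n}. FDP_hat n X t \<le> q}"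

text \<open>Rejection set of the Barber-Candes procedure (tau = +infinity gives no rejections).\<close>
definition BC_rej :: "nat \<Rightarrow> real \<Rightarrow> (nat \<Rightarrow> real) \<Rightarrow> nat set" where
  "BC_rej n q X = (if BC_thresholds n q X = {} then {}
      else {i \<in> {..<n}. X i \<ge> Min (BC_thresholds n q X)})"

definition n_signals :: "real \<Rightarrow> nat \<Rightarrow> nat" where
  "n_signals \<beta> n = nat \<lfloor>real n powr (1 - \<beta>)\<rfloor>"

definition signal_sets :: "real \<Rightarrow> nat \<Rightarrow> nat set set" where
  "signal_sets \<beta> n = {F. F \<subseteq> {..<n} \<and> card F = n_signals \<beta> n}"

definition means :: "real \<Rightarrow> nat \<Rightarrow> nat set \<Rightarrow> nat \<Rightarrow> real" where
  "means r n F i = (if i \<in> F then sqrt (2 * r * ln (real n)) else 0)"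

definition X_law :: "real \<Rightarrow> nat \<Rightarrow> nat set \<Rightarrow> (nat \<Rightarrow> real) measure" where
  "X_law r n F = (\<Pi>\<^sub>M i\<in>{..<n}. density lborel (normal_density (means r n F i) 1))"

definition FDR_BC :: "real \<Rightarrow> real \<Rightarrow> nat \<Rightarrow> real \<Rightarrow> real" where
  "FDR_BC \<beta> r n q = measure_pmf.expectation (pmf_of_set (signal_sets \<beta> n))
      (\<lambda>F. \<integral>X. FDP (BC_rej n q X) F \<partial>(X_law r n F))"

definition FNR_BC :: "real \<Rightarrow> real \<Rightarrow> nat \<Rightarrow> real \<Rightarrow> real" where
  "FNR_BC \<beta> r n q = measure_pmf.expectation (pmf_of_set (signal_sets \<beta> n))
      (\<lambda>F. \<integral>X. FNP (BC_rej n q X) F \<partial>(X_law r n F))"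

end

theory Submission
  imports Defs "HOL-Real_Asymp.Real_Asymp"
begin

(* Take the threshold t0 = sqrt (2 s log n) with beta < s < r. All but a fraction n^-(sqrt r - sqrt s)^2
   of the signals exceed t0, while only about n^(1 - s) = o(q m) nulls fall below -t0; hence
   FDP_hat t0 < q, the Barber-Candes threshold lies below t0 and the false negative proportion is at
   most the fraction of signals below t0. Since the null distribution is symmetric, the numbers of
   nulls above t and below -t are comparable uniformly in t, which is checked on a grid of O(log n)
   points; together with FDP_hat \<le> q this bounds the false discoveries by about 2 q |R|.
   Each probability bound is Chebyshev's inequality for a sum of independent indicators. *)

section \<open>Gaussian tails\<close>

abbreviation normal_measure :: "real \<Rightarrow> real measure" where
  "normal_measure \<mu> \<equiv> density lborel (normal_density \<mu> 1)"

lemma prob_space_normal_measure: "prob_space (normal_measure \<mu>)"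
  by (rule prob_space_normal_density) simp

lemma emeasure_normal_measure_atLeast:
  "emeasure (normal_measure \<mu>) {a..} = emeasure (normal_measure 0) {a - \<mu>..}"
proof -
  have "emeasure (normal_measure \<mu>) {a..}
      = (\<integral>\<^sup>+y. ennreal (normal_density \<mu> 1 (\<mu> + 1 * y)) * indicator {a..} (\<mu> + 1 * y) \<partial>lborel)"
    by (simp add: emeasure_density, subst nn_integral_real_affine[where c=1 and t=\<mu>]) auto
  also have "\<dots> = (\<integral>\<^sup>+y. ennreal (normal_density 0 1 y) * indicator {a - \<mu>..} y \<partial>lborel)"
    by (intro nn_integral_cong) (auto simp: normal_density_def indicator_def)
  finally show ?thesis by (simp add: emeasure_density)
qed

lemma emeasure_normal_measure_atMost:
  "emeasure (normal_measure \<mu>) {..a} = emeasure (normal_measure 0) {\<mu> - a..}"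
proof -
  have "emeasure (normal_measure \<mu>) {..a}
      = (\<integral>\<^sup>+y. ennreal (normal_density \<mu> 1 (\<mu> + (-1) * y)) * indicator {..a} (\<mu> + (-1) * y) \<partial>lborel)"
    by (simp add: emeasure_density, subst nn_integral_real_affine[where c="-1" and t=\<mu>]) auto
  also have "\<dots> = (\<integral>\<^sup>+y. ennreal (normal_density 0 1 y) * indicator {\<mu> - a..} y \<partial>lborel)"
    by (intro nn_integral_cong) (auto simp: normal_density_def indicator_def power2_commute)
  finally show ?thesis by (simp add: emeasure_density)
qed

definition gauss_tail :: "real \<Rightarrow> real" where
  "gauss_tail t = measure (normal_measure 0) {t..}"

lemma measure_normal_measure_atLeast: "measure (normal_measure \<mu>) {a..} = gauss_tail (a - \<mu>)"
  unfolding gauss_tail_def measure_def emeasure_normal_measure_atLeast[of \<mu> a] ..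

lemma measure_normal_measure_atMost: "measure (normal_measure \<mu>) {..a} = gauss_tail (\<mu> - a)"
  unfolding gauss_tail_def measure_def emeasure_normal_measure_atMost[of \<mu> a] ..

lemma gauss_tail_nonneg: "0 \<le> gauss_tail t"
  by (simp add: gauss_tail_def)

lemma gauss_tail_le_1: "gauss_tail t \<le> 1"
proof -
  interpret prob_space "normal_measure 0" by (rule prob_space_normal_measure)
  show ?thesis unfolding gauss_tail_def by (rule prob_le_1)
qed

lemma gauss_tail_antimono: "antimono gauss_tail"
proof (rule antimonoI)
  interpret prob_space "normal_measure 0" by (rule prob_space_normal_measure)
  show "gauss_tail b \<le> gauss_tail a" if "a \<le> b" for a b
    unfolding gauss_tail_def using that by (intro finite_measure_mono) auto
qed

lemma gauss_tail_zero_ge: "1/2 \<le> gauss_tail 0"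
proof -
  interpret prob_space "normal_measure 0" by (rule prob_space_normal_measure)
  have "{..0} \<union> {0..} = (UNIV :: real set)"
    by auto
  then have "1 = measure (normal_measure 0) ({..0} \<union> {0..})"
    using prob_space by simp
  also have "\<dots> \<le> measure (normal_measure 0) {..0} + measure (normal_measure 0) {0..}"
    by (rule measure_Un_le) auto
  finally show ?thesis
    unfolding measure_normal_measure_atMost measure_normal_measure_atLeast by simp
qed

text \<open>Shift the integral by \<open>t\<close> and use \<open>t\<^sup>2 + y\<^sup>2 \<le> (t + y)\<^sup>2\<close> for \<open>y \<ge> 0\<close>.\<close>
lemma gauss_tail_le_exp:
  assumes "0 \<le> t"
  shows "gauss_tail t \<le> exp (- t\<^sup>2 / 2)"
proof -
  interpret prob_space "normal_measure 0" by (rule prob_space_normal_measure)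
  have "emeasure (normal_measure 0) {t..}
      = (\<integral>\<^sup>+y. ennreal (normal_density 0 1 (t + 1 * y)) * indicator {t..} (t + 1 * y) \<partial>lborel)"
    by (simp add: emeasure_density, subst nn_integral_real_affine[where c=1 and t=t]) auto
  also have "\<dots> \<le> (\<integral>\<^sup>+y. ennreal (exp (- t\<^sup>2 / 2)) * ennreal (normal_density 0 1 y) \<partial>lborel)"
  proof (intro nn_integral_mono)
    fix y :: real
    show "ennreal (normal_density 0 1 (t + 1 * y)) * indicator {t..} (t + 1 * y)
          \<le> ennreal (exp (- t\<^sup>2 / 2)) * ennreal (normal_density 0 1 y)"
    proof (cases "0 \<le> y")
      case True
      have "t\<^sup>2 + y\<^sup>2 \<le> (t + y)\<^sup>2"
        using True assms by (simp add: power2_eq_square algebra_simps)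
      then have "exp (- (t + y)\<^sup>2 / 2) \<le> exp (- t\<^sup>2 / 2) * exp (- y\<^sup>2 / 2)"
        by (simp add: exp_add[symmetric] divide_simps)
      then have "normal_density 0 1 (t + y) \<le> exp (- t\<^sup>2 / 2) * normal_density 0 1 y"
        by (simp add: std_normal_density_def mult.left_commute divide_simps)
      then show ?thesis
        by (simp add: ennreal_mult'[symmetric] indicator_def)
    qed (simp add: indicator_def)
  qed
  also have "\<dots> = ennreal (exp (- t\<^sup>2 / 2)) * emeasure (normal_measure 0) UNIV"
    by (simp add: nn_integral_cmult emeasure_density)
  finally show ?thesis
    unfolding gauss_tail_def using prob_space by (simp add: emeasure_eq_measure)
qed

lemma gauss_tail_sqrt_ln_le:
  assumes "0 \<le> a" "1 \<le> x"
  shows "gauss_tail (sqrt (2 * a * ln x)) \<le> x powr - a"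
proof -
  have "gauss_tail (sqrt (2 * a * ln x)) \<le> exp (- (sqrt (2 * a * ln x))\<^sup>2 / 2)"
    by (rule gauss_tail_le_exp) (use assms in simp)
  also have "\<dots> = x powr - a"
    using assms by (simp add: powr_def)
  finally show ?thesis .
qed

text \<open>The standard normal density is bounded by \<open>1\<close>, so \<open>gauss_tail\<close> is \<open>1\<close>-Lipschitz.\<close>
lemma gauss_tail_le_add:
  assumes "a \<le> b"
  shows "gauss_tail a \<le> gauss_tail b + (b - a)"
proof -
  interpret prob_space "normal_measure 0" by (rule prob_space_normal_measure)
  have "emeasure (normal_measure 0) {a..<b}
      = (\<integral>\<^sup>+x. ennreal (normal_density 0 1 x) * indicator {a..<b} x \<partial>lborel)"
    by (simp add: emeasure_density)
  also have "\<dots> \<le> (\<integral>\<^sup>+x. indicator {a..<b} x \<partial>lborel)"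
  proof (intro nn_integral_mono)
    fix x :: real
    have "1 / sqrt (2 * pi) \<le> 1"
      using pi_gt3 by (simp add: divide_simps)
    then have "normal_density 0 1 x \<le> 1 * 1"
      unfolding std_normal_density_def by (intro mult_mono) auto
    then show "ennreal (normal_density 0 1 x) * indicator {a..<b} x \<le> indicator {a..<b} x"
      by (simp add: indicator_def)
  qed
  finally have "measure (normal_measure 0) {a..<b} \<le> b - a"
    using assms by (simp add: emeasure_eq_measure)
  moreover have "gauss_tail a = measure (normal_measure 0) {a..<b} + gauss_tail b"
    unfolding gauss_tail_def using assms
    by (subst finite_measure_Union[symmetric]) (auto intro: arg_cong[where f="measure _"])
  ultimately show ?thesis by simp
qed

lemma continuous_on_gauss_tail: "continuous_on A gauss_tail"
proof (rule lipschitz_on_continuous_on)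
  show "1-lipschitz_on A gauss_tail"
  proof (rule lipschitz_onI)
    fix x y
    have "\<bar>gauss_tail x - gauss_tail y\<bar> \<le> \<bar>x - y\<bar>"
      using gauss_tail_le_add[of x y] gauss_tail_le_add[of y x]
        antimonoD[OF gauss_tail_antimono, of x y] antimonoD[OF gauss_tail_antimono, of y x]
      by (cases "x \<le> y") linarith+
    then show "dist (gauss_tail x) (gauss_tail y) \<le> 1 * dist x y"
      by (simp add: dist_real_def)
  qed simp
qed

lemma gauss_tail_attains:
  assumes "0 < y" "y \<le> gauss_tail 0"
  obtains u where "0 \<le> u" "gauss_tail u = y"
proof -
  define T where "T = sqrt (2 * ln (1 / y))"
  have "y \<le> 1" using assms gauss_tail_le_1 order_trans by blast
  then have "0 \<le> ln (1 / y)" using assms by simp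
  then have "gauss_tail T \<le> y"
    using gauss_tail_le_exp[of T] assms by (simp add: T_def exp_minus ln_div)
  then have "\<exists>u. 0 \<le> u \<and> u \<le> T \<and> gauss_tail u = y"
    using assms \<open>y \<le> 1\<close> continuous_on_gauss_tail by (intro IVT2') (auto simp: T_def)
  then show ?thesis using that by blast
qed

lemma gauss_tail_geometric_grid:
  obtains u :: "nat \<Rightarrow> real" where "u 0 = 0" "\<And>k. gauss_tail (u k) = gauss_tail 0 * (2/3)^k"
proof -
  have "\<exists>u. gauss_tail u = gauss_tail 0 * (2/3)^k" for k :: nat
  proof -
    have "0 < gauss_tail 0 * (2/3)^k"
      using gauss_tail_zero_ge by (simp add: less_le_trans)
    moreover have "gauss_tail 0 * (2/3)^k \<le> gauss_tail 0"
      using gauss_tail_nonneg by (simp add: mult_left_le power_le_one)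
    ultimately show ?thesis
      by (metis gauss_tail_attains)
  qed
  then obtain u where u: "\<And>k. gauss_tail (u k) = gauss_tail 0 * (2/3)^k"
    by metis
  show ?thesis
    by (rule that[of "u(0 := 0)"]) (use u in auto)
qed

section \<open>Counting independent events\<close>

lemma real_card_filter_eq_sum_indicator:
  assumes "finite J"
  shows "real (card {i\<in>J. x i \<in> A i}) = (\<Sum>i\<in>J. indicator (A i) (x i))"
proof -
  have "real (card {i\<in>J. x i \<in> A i}) = (\<Sum>i\<in>J. if x i \<in> A i then 1 else 0)"
    using sum.inter_filter[OF assms, of "\<lambda>_. 1 :: real" "\<lambda>i. x i \<in> A i"] by simp
  then show ?thesis by (simp add: indicator_def of_bool_def)
qed

context finite_product_prob_space
begin

lemma integral_prod_subset:
  fixes f :: "_ \<Rightarrow> _ \<Rightarrow> real"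
  assumes "J \<subseteq> I" "\<And>i. i \<in> J \<Longrightarrow> integrable (M i) (f i)"
  shows "(\<integral>x. (\<Prod>i\<in>J. f i (x i)) \<partial>Pi\<^sub>M I M) = (\<Prod>i\<in>J. integral\<^sup>L (M i) (f i))"
proof -
  define g where "g i = (if i \<in> J then f i else (\<lambda>_. 1))" for i
  have restrict: "(\<Prod>i\<in>J. h i) = (\<Prod>i\<in>I. if i \<in> J then h i else 1)" for h :: "_ \<Rightarrow> real"
    using prod.inter_restrict[OF finite_index, of h J] assms(1) by (simp add: Int_absorb1)
  have "(\<integral>x. (\<Prod>i\<in>J. f i (x i)) \<partial>Pi\<^sub>M I M) = (\<integral>x. (\<Prod>i\<in>I. g i (x i)) \<partial>Pi\<^sub>M I M)"
    unfolding restrict by (intro Bochner_Integration.integral_cong refl prod.cong) (simp_all add: g_def)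
  also have "\<dots> = (\<Prod>i\<in>I. integral\<^sup>L (M i) (g i))"
    using assms(2) by (intro product_integral_prod finite_index) (simp add: g_def)
  also have "\<dots> = (\<Prod>i\<in>J. integral\<^sup>L (M i) (f i))"
    unfolding restrict by (intro prod.cong) (simp_all add: g_def M.prob_space)
  finally show ?thesis .
qed

lemma borel_measurable_count:
  assumes "J \<subseteq> I" "\<And>i. i \<in> J \<Longrightarrow> A i \<in> sets (M i)"
  shows "(\<lambda>x. real (card {j\<in>J. x j \<in> A j})) \<in> borel_measurable (Pi\<^sub>M I M)"
proof -
  have "(\<lambda>x. indicator (A j) (x j) :: real) \<in> borel_measurable (Pi\<^sub>M I M)" if "j \<in> J" for j
    using that assms by (intro measurable_compose[OF measurable_component_singleton]) auto
  then show ?thesis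
    using finite_subset[OF assms(1) finite_index]
    by (simp add: real_card_filter_eq_sum_indicator)
qed

lemma expectation_indicator_component:
  assumes "j \<in> I" "A \<in> sets (M j)"
  shows "expectation (\<lambda>x. indicator A (x j)) = measure (M j) A"
  using integral_prod_subset[of "{j}" "\<lambda>_. indicator A"] assms by (simp add: M.emeasure_eq_measure)

lemma integrable_indicator_component:
  assumes "j \<in> I" "A \<in> sets (M j)"
  shows "integrable (Pi\<^sub>M I M) (\<lambda>x. indicator A (x j) :: real)"
  using assms by (intro integrable_const_bound[where B=1] measurable_compose[OF measurable_component_singleton]) auto

lemma expectation_count:
  assumes "J \<subseteq> I" "\<And>i. i \<in> J \<Longrightarrow> A i \<in> sets (M i)"
  shows "expectation (\<lambda>x. real (card {j\<in>J. x j \<in> A j})) = (\<Sum>j\<in>J. measure (M j) (A j))"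
  using assms finite_subset[OF assms(1) finite_index]
  by (simp add: real_card_filter_eq_sum_indicator subset_iff
      integrable_indicator_component expectation_indicator_component)

lemma expectation_indicator_product_le:
  assumes "i \<in> I" "j \<in> I" "A i \<in> sets (M i)" "A j \<in> sets (M j)"
  shows "expectation (\<lambda>x. indicator (A i) (x i) * indicator (A j) (x j))
    \<le> measure (M i) (A i) * measure (M j) (A j) + (if i = j then measure (M i) (A i) else 0)"
proof (cases "i = j")
  case True
  then have "(\<lambda>x. indicator (A i) (x i) * indicator (A j) (x j) :: real) = (\<lambda>x. indicator (A i) (x i))"
    by (auto simp: indicator_def)
  then show ?thesis
    using assms True by (simp add: expectation_indicator_component)
next
  case False
  have "expectation (\<lambda>x. \<Prod>k\<in>{i, j}. indicator (A k) (x k) :: real)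
      = (\<Prod>k\<in>{i, j}. integral\<^sup>L (M k) (indicator (A k)))"
    using assms by (intro integral_prod_subset) (auto simp: M.emeasure_eq_measure)
  then show ?thesis
    using False assms by (simp add: M.emeasure_eq_measure)
qed

text \<open>Equivalently, the variance of a count of independent events is at most its mean.\<close>
lemma count_second_moment:
  assumes "J \<subseteq> I" "\<And>i. i \<in> J \<Longrightarrow> A i \<in> sets (M i)"
  defines "e \<equiv> \<Sum>j\<in>J. measure (M j) (A j)"
  shows "integrable (Pi\<^sub>M I M) (\<lambda>x. (real (card {j\<in>J. x j \<in> A j}))\<^sup>2)"
    and "expectation (\<lambda>x. (real (card {j\<in>J. x j \<in> A j}))\<^sup>2) \<le> e\<^sup>2 + e"
proof -
  have "finite J"
    using finite_subset[OF assms(1) finite_index] .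
  have square: "(real (card {j\<in>J. x j \<in> A j}))\<^sup>2
      = (\<Sum>i\<in>J. \<Sum>j\<in>J. indicator (A i) (x i) * indicator (A j) (x j))" for x
    unfolding real_card_filter_eq_sum_indicator[OF \<open>finite J\<close>] by (simp add: power2_eq_square sum_product)
  have ind: "(\<lambda>x. indicator (A j) (x j) :: real) \<in> borel_measurable (Pi\<^sub>M I M)" if "j \<in> J" for j
    using that assms by (intro measurable_compose[OF measurable_component_singleton]) auto
  have int: "integrable (Pi\<^sub>M I M) (\<lambda>x. indicator (A i) (x i) * indicator (A j) (x j) :: real)"
    if "i \<in> J" "j \<in> J" for i j
    using ind[OF that(1)] ind[OF that(2)] by (intro integrable_const_bound[where B=1]) (auto simp: indicator_def)
  have E: "expectation (\<lambda>x. indicator (A i) (x i) * indicator (A j) (x j))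
      \<le> measure (M i) (A i) * measure (M j) (A j) + (if i = j then measure (M i) (A i) else 0)"
    if "i \<in> J" "j \<in> J" for i j
    using that assms(1,2) by (intro expectation_indicator_product_le) auto
  show "integrable (Pi\<^sub>M I M) (\<lambda>x. (real (card {j\<in>J. x j \<in> A j}))\<^sup>2)"
    unfolding square using int by (simp add: Bochner_Integration.integrable_sum)
  have "expectation (\<lambda>x. (real (card {j\<in>J. x j \<in> A j}))\<^sup>2)
      \<le> (\<Sum>i\<in>J. \<Sum>j\<in>J. measure (M i) (A i) * measure (M j) (A j) + (if i = j then measure (M i) (A i) else 0))"
    unfolding square using int E
    by (simp add: Bochner_Integration.integral_sum Bochner_Integration.integrable_sum sum_mono)
  also have "\<dots> = e\<^sup>2 + e"
    using \<open>finite J\<close> by (simp add: e_def sum.distrib power2_eq_square sum_product)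
  finally show "expectation (\<lambda>x. (real (card {j\<in>J. x j \<in> A j}))\<^sup>2) \<le> e\<^sup>2 + e" .
qed

lemma prob_count_deviation:
  assumes "J \<subseteq> I" "\<And>i. i \<in> J \<Longrightarrow> A i \<in> sets (M i)" "0 < a"
  defines "e \<equiv> \<Sum>j\<in>J. measure (M j) (A j)"
  shows "prob {x \<in> space (Pi\<^sub>M I M). a \<le> \<bar>real (card {j\<in>J. x j \<in> A j}) - e\<bar>} \<le> e / a\<^sup>2"
proof -
  define Y where "Y x = real (card {j\<in>J. x j \<in> A j})" for x
  have Y: "Y \<in> borel_measurable (Pi\<^sub>M I M)" "expectation Y = e"
    unfolding Y_def e_def using borel_measurable_count expectation_count assms(1,2) by auto
  note Y2 = count_second_moment[OF assms(1,2), folded e_def Y_def]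
  then have "variance Y \<le> e"
    using variance_eq[of Y] square_integrable_imp_integrable[OF Y(1) Y2(1)] Y(2) by simp
  have "prob {x \<in> space (Pi\<^sub>M I M). a \<le> \<bar>Y x - e\<bar>} \<le> variance Y / a\<^sup>2"
    using Chebyshev_inequality[OF Y(1) Y2(1) assms(3)] Y(2) by simp
  also have "\<dots> \<le> e / a\<^sup>2"
    using \<open>variance Y \<le> e\<close> by (simp add: divide_right_mono)
  finally show ?thesis
    unfolding Y_def .
qed

lemma count_deviation_in_sets:
  assumes "J \<subseteq> I" "\<And>i. i \<in> J \<Longrightarrow> A i \<in> sets (M i)"
  shows "{x \<in> space (Pi\<^sub>M I M). a \<le> \<bar>real (card {j\<in>J. x j \<in> A j}) - e\<bar>} \<in> sets (Pi\<^sub>M I M)"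
    and "{x \<in> space (Pi\<^sub>M I M). a \<le> real (card {j\<in>J. x j \<in> A j})} \<in> sets (Pi\<^sub>M I M)"
proof -
  note [measurable] = borel_measurable_count[OF assms]
  show "{x \<in> space (Pi\<^sub>M I M). a \<le> \<bar>real (card {j\<in>J. x j \<in> A j}) - e\<bar>} \<in> sets (Pi\<^sub>M I M)"
    by measurable
  show "{x \<in> space (Pi\<^sub>M I M). a \<le> real (card {j\<in>J. x j \<in> A j})} \<in> sets (Pi\<^sub>M I M)"
    by measurable
qed

lemma prob_count_ge:
  assumes "J \<subseteq> I" "\<And>i. i \<in> J \<Longrightarrow> A i \<in> sets (M i)"
    and mean: "(\<Sum>j\<in>J. measure (M j) (A j)) \<le> b" "b \<le> a" "0 < a"
  shows "prob {x \<in> space (Pi\<^sub>M I M). 2 * a \<le> real (card {j\<in>J. x j \<in> A j})} \<le> b / a\<^sup>2"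
proof -
  let ?e = "\<Sum>j\<in>J. measure (M j) (A j)"
  have "prob {x \<in> space (Pi\<^sub>M I M). 2 * a \<le> real (card {j\<in>J. x j \<in> A j})}
      \<le> prob {x \<in> space (Pi\<^sub>M I M). a \<le> \<bar>real (card {j\<in>J. x j \<in> A j}) - ?e\<bar>}"
    using mean count_deviation_in_sets[OF assms(1,2)] by (intro finite_measure_mono) auto
  also have "\<dots> \<le> ?e / a\<^sup>2"
    by (rule prob_count_deviation[OF assms(1,2,5)])
  also have "\<dots> \<le> b / a\<^sup>2"
    using mean(1) by (rule divide_right_mono) simp
  finally show ?thesis .
qed

text \<open>The deviation \<open>e/8 + d\<close> is chosen so that, by AM-GM, \<open>e / (e/8 + d)\<^sup>2 \<le> 2 / d\<close>
  uniformly in the mean \<open>e\<close>.\<close>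
lemma prob_count_deviation_le:
  assumes "J \<subseteq> I" "\<And>i. i \<in> J \<Longrightarrow> A i \<in> sets (M i)" "0 < d"
  defines "e \<equiv> \<Sum>j\<in>J. measure (M j) (A j)"
  shows "prob {x \<in> space (Pi\<^sub>M I M). e / 8 + d \<le> \<bar>real (card {j\<in>J. x j \<in> A j}) - e\<bar>} \<le> 2 / d"
proof -
  have "0 \<le> e"
    unfolding e_def by (simp add: sum_nonneg)
  have "e * d / 2 \<le> (e / 8 + d)\<^sup>2"
    using zero_le_power2[of "e / 8 - d"] by (simp add: power2_eq_square algebra_simps)
  then have "e / (e / 8 + d)\<^sup>2 \<le> 2 / d"
    using \<open>0 \<le> e\<close> \<open>0 < d\<close> by (cases "e = 0") (auto simp: field_simps)
  moreover have "0 < e / 8 + d"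
    using \<open>0 \<le> e\<close> \<open>0 < d\<close> by simp
  ultimately show ?thesis
    using prob_count_deviation[OF assms(1,2)] unfolding e_def by (meson order_trans)
qed

lemma counts_near_means:
  assumes "J \<subseteq> I" "\<And>k j. j \<in> J \<Longrightarrow> A k \<in> sets (M j)" "0 < d"
  defines "e \<equiv> \<lambda>k. \<Sum>j\<in>J. measure (M j) (A k)"
  obtains B where "B \<in> events" "prob B \<le> 2 * (real K + 1) / d"
    "\<And>x k. x \<in> space (Pi\<^sub>M I M) \<Longrightarrow> x \<notin> B \<Longrightarrow> k \<le> K \<Longrightarrow>
      \<bar>real (card {j\<in>J. x j \<in> A k}) - e k\<bar> < e k / 8 + d"
proof -
  define dev where
    "dev k = {x \<in> space (Pi\<^sub>M I M). e k / 8 + d \<le> \<bar>real (card {j\<in>J. x j \<in> A k}) - e k\<bar>}" for k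
  have "dev k \<in> events" "prob (dev k) \<le> 2 / d" for k
    unfolding dev_def e_def using assms(1,2,3)
    by (auto intro!: count_deviation_in_sets(1) prob_count_deviation_le)
  show ?thesis
  proof
    show "(\<Union>k\<le>K. dev k) \<in> events"
      using \<open>dev _ \<in> events\<close> by auto
    have "prob (\<Union>k\<le>K. dev k) \<le> (\<Sum>k\<le>K. prob (dev k))"
      using \<open>dev _ \<in> events\<close> by (intro measure_UNION_le) auto
    also have "\<dots> \<le> (\<Sum>k\<le>K. 2 / d)"
      using \<open>prob (dev _) \<le> 2 / d\<close> by (rule sum_mono)
    also have "\<dots> = 2 * (real K + 1) / d"
      by (simp add: field_simps)
    finally show "prob (\<Union>k\<le>K. dev k) \<le> 2 * (real K + 1) / d" .
  qed (auto simp: dev_def not_le)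
qed

end

lemma finite_product_prob_space_normal:
  "finite I \<Longrightarrow> finite_product_prob_space (\<lambda>i. normal_measure (\<mu> i)) I"
  unfolding finite_product_prob_space_def finite_product_sigma_finite_def
    product_prob_space_def product_prob_space_axioms_def product_sigma_finite_def
    finite_product_sigma_finite_axioms_def
  using prob_space_normal_measure prob_space_imp_sigma_finite by blast

section \<open>The Barber-Candes threshold\<close>

text \<open>The smallest \<open>|X i| \<ge> t0\<close> is a candidate threshold that rejects the same coordinates as
  \<open>t0\<close> and has no more negative counts; the Barber-Candes threshold lies below it.\<close>
lemma BC_rej_threshold:
  fixes X :: "nat \<Rightarrow> real"
  assumes "0 \<le> t0"
    and FDP_hat_t0: "1 + real (card {i\<in>{..<n}. X i \<le> - t0}) \<le> q * real (card {i\<in>{..<n}. t0 \<le> X i})"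
  obtains \<tau> where "0 \<le> \<tau>" "FDP_hat n X \<tau> \<le> q" "BC_rej n q X = {i\<in>{..<n}. \<tau> \<le> X i}"
    "{i\<in>{..<n}. t0 \<le> X i} \<subseteq> BC_rej n q X"
proof -
  define T where "T = (\<lambda>i. \<bar>X i\<bar>) ` {i\<in>{..<n}. t0 \<le> \<bar>X i\<bar>}"
  have "{i\<in>{..<n}. t0 \<le> X i} \<noteq> {}"
    using FDP_hat_t0 by (auto simp del: Collect_empty_eq)
  then have "T \<noteq> {}" "finite T"
    unfolding T_def by auto
  define t' where "t' = Min T"
  have t'_le: "t' \<le> X i" if "i < n" "t0 \<le> X i" for i
  proof -
    have "X i \<in> T"
      unfolding T_def using that assms(1) by (intro image_eqI[of _ _ i]) auto
    then show ?thesis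
      unfolding t'_def using \<open>finite T\<close> by simp
  qed
  have "t' \<in> T"
    unfolding t'_def using \<open>T \<noteq> {}\<close> \<open>finite T\<close> by simp
  then have "t0 \<le> t'" and t'_abs: "t' \<in> (\<lambda>i. \<bar>X i\<bar>) ` {..<n}"
    unfolding T_def by auto
  have same_pos: "{i\<in>{..<n}. t' \<le> X i} = {i\<in>{..<n}. t0 \<le> X i}"
    using t'_le \<open>t0 \<le> t'\<close> by force
  have pos: "1 \<le> real (card {i\<in>{..<n}. t0 \<le> X i})"
    using \<open>{i\<in>{..<n}. t0 \<le> X i} \<noteq> {}\<close> by (simp add: Suc_le_eq card_gt_0_iff)
  have "FDP_hat n X t' = (1 + real (card {i\<in>{..<n}. X i \<le> - t'})) / real (card {i\<in>{..<n}. t0 \<le> X i})"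
    unfolding FDP_hat_def same_pos using pos by (simp add: max_absorb2)
  also have "\<dots> \<le> (1 + real (card {i\<in>{..<n}. X i \<le> - t0})) / real (card {i\<in>{..<n}. t0 \<le> X i})"
    using \<open>t0 \<le> t'\<close> pos by (intro divide_right_mono add_left_mono of_nat_mono card_mono) auto
  also have "\<dots> \<le> q"
    using FDP_hat_t0 pos by (simp add: pos_divide_le_eq)
  finally have "FDP_hat n X t' \<le> q" .
  then have "t' \<in> BC_thresholds n q X"
    unfolding BC_thresholds_def using t'_abs by simp
  moreover have "finite (BC_thresholds n q X)"
    unfolding BC_thresholds_def by simp
  ultimately have \<tau>: "Min (BC_thresholds n q X) \<in> BC_thresholds n q X"
    and "Min (BC_thresholds n q X) \<le> t'"
    using Min_in[of "BC_thresholds n q X"] Min_le[of "BC_thresholds n q X" t'] by blast+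
  show ?thesis
  proof
    show "0 \<le> Min (BC_thresholds n q X)" "FDP_hat n X (Min (BC_thresholds n q X)) \<le> q"
      using \<tau> unfolding BC_thresholds_def by auto
    show rej: "BC_rej n q X = {i\<in>{..<n}. Min (BC_thresholds n q X) \<le> X i}"
      unfolding BC_rej_def using \<tau> by auto
    show "{i\<in>{..<n}. t0 \<le> X i} \<subseteq> BC_rej n q X"
      unfolding rej using t'_le \<open>Min (BC_thresholds n q X) \<le> t'\<close> by force
  qed
qed

lemma FNP_le_missed_signals:
  fixes X :: "nat \<Rightarrow> real"
  assumes "finite F" "F \<subseteq> {..<n}" "{i\<in>{..<n}. t \<le> X i} \<subseteq> R"
  shows "FNP R F \<le> real (card {i\<in>F. X i < t}) / real (card F)"
proof -
  have "F - R \<subseteq> {i\<in>F. X i < t}"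
  proof
    fix i assume i: "i \<in> F - R"
    have "\<not> t \<le> X i"
    proof
      assume "t \<le> X i"
      then have "i \<in> R" using i assms(2,3) by auto
      then show False using i by simp
    qed
    then show "i \<in> {i\<in>F. X i < t}" using i by auto
  qed
  then have "card (F - R) \<le> card {i\<in>F. X i < t}"
    using assms(1) by (intro card_mono) auto
  then show ?thesis
    unfolding FNP_def by (simp add: divide_right_mono)
qed

lemma FDP_le_of_null_counts:
  fixes X :: "nat \<Rightarrow> real"
  assumes "F \<subseteq> {..<n}" "0 < card F" "0 \<le> \<tau>" "FDP_hat n X \<tau> \<le> q"
    and R: "R = {i\<in>{..<n}. \<tau> \<le> X i}"
    and many_rej: "real (card F) \<le> 2 * real (card R)"
    and nulls: "real (card {i\<in>{..<n} - F. \<tau> \<le> X i}) \<le> 2 * real (card {i\<in>{..<n} - F. X i \<le> - \<tau>}) + e"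
    and "0 \<le> e"
  shows "FDP R F \<le> 2 * q + 2 * e / real (card F)"
proof -
  have "card R \<noteq> 0"
    using many_rej \<open>0 < card F\<close> by auto
  then have R_pos: "1 \<le> real (card R)"
    by simp
  have "1 + real (card {i\<in>{..<n}. X i \<le> - \<tau>}) \<le> q * real (card R)"
    using \<open>FDP_hat n X \<tau> \<le> q\<close> R_pos unfolding FDP_hat_def R by (simp add: divide_simps max_def)
  moreover have "card {i\<in>{..<n} - F. X i \<le> - \<tau>} \<le> card {i\<in>{..<n}. X i \<le> - \<tau>}"
    by (intro card_mono) auto
  moreover have "R - F = {i\<in>{..<n} - F. \<tau> \<le> X i}"
    unfolding R by auto
  ultimately have "real (card (R - F)) \<le> 2 * q * real (card R) + e"
    using nulls by simp
  then have "FDP R F \<le> 2 * q + e / real (card R)"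
    unfolding FDP_def using R_pos by (simp add: divide_simps)
  also have "e / real (card R) \<le> 2 * e / real (card F)"
  proof -
    have "e * real (card F) \<le> e * (2 * real (card R))"
      using many_rej \<open>0 \<le> e\<close> by (rule mult_left_mono)
    then show ?thesis
      using R_pos \<open>0 < card F\<close> by (simp add: divide_simps algebra_simps)
  qed
  finally show ?thesis by simp
qed

text \<open>For the last grid point \<open>u k \<le> t\<close>, monotonicity gives \<open>V t \<le> V (u k)\<close> and
  \<open>W (u (Suc k)) \<le> W t\<close>; the factor \<open>2\<close> absorbs the step \<open>c k \<le> 3/2 * c (Suc k)\<close>.\<close>
lemma antimono_grid_comparison:
  fixes V W :: "real \<Rightarrow> real" and u c :: "nat \<Rightarrow> real"
  assumes "antimono V" "antimono W" "\<And>t. 0 \<le> W t" "u 0 = 0"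
    and c: "\<And>k. 0 \<le> c k" "\<And>k. c k \<le> 3/2 * c (Suc k)" "c K \<le> 2 * d"
    and V_grid: "\<And>k. k \<le> K \<Longrightarrow> V (u k) \<le> 9/8 * c k + d"
    and W_grid: "\<And>k. k \<le> K \<Longrightarrow> 7/8 * c k - d \<le> W (u k)"
    and "0 \<le> t" "0 \<le> d"
  shows "V t \<le> 2 * W t + 4 * d"
proof -
  define k where "k = Max {k. k \<le> K \<and> u k \<le> t}"
  have fin: "finite {k. k \<le> K \<and> u k \<le> t}"
    by (rule finite_subset[of _ "{..K}"]) auto
  have "{k. k \<le> K \<and> u k \<le> t} \<noteq> {}"
    using \<open>u 0 = 0\<close> \<open>0 \<le> t\<close> by auto
  then have "k \<in> {k. k \<le> K \<and> u k \<le> t}"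
    unfolding k_def using fin by (intro Max_in)
  then have "k \<le> K" "u k \<le> t"
    by auto
  have k_max: "j \<le> k" if "j \<le> K" "u j \<le> t" for j
    unfolding k_def using that by (intro Max_ge[OF fin]) simp
  have Vt: "V t \<le> 9/8 * c k + d"
    using antimonoD[OF \<open>antimono V\<close> \<open>u k \<le> t\<close>] V_grid[OF \<open>k \<le> K\<close>] by linarith
  show ?thesis
  proof (cases "k = K")
    case True
    then show ?thesis using Vt c assms(3)[of t] \<open>0 \<le> d\<close> by simp
  next
    case False
    then have "Suc k \<le> K"
      using \<open>k \<le> K\<close> by simp
    then have "t < u (Suc k)"
      using k_max[of "Suc k"] by force
    then have "7/8 * c (Suc k) - d \<le> W t"
      using antimonoD[OF \<open>antimono W\<close>, of t "u (Suc k)"] W_grid[OF \<open>Suc k \<le> K\<close>] by simp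
    then show ?thesis using Vt c(1)[of "Suc k"] c(2)[of k] \<open>0 \<le> d\<close> by linarith
  qed
qed

lemma finite_BC_rej: "finite (BC_rej n q X)"
  by (simp add: BC_rej_def)

lemma FDP_le_1: "finite R \<Longrightarrow> FDP R F \<le> 1"
  by (simp add: FDP_def divide_le_eq_1 card_mono card_gt_0_iff)

lemma FNP_le_1: "finite F \<Longrightarrow> FNP R F \<le> 1"
  by (simp add: FNP_def divide_le_eq_1 card_mono card_gt_0_iff)

lemma BC_FDP_FNP_le_of_counts:
  fixes X :: "nat \<Rightarrow> real"
  assumes F: "F \<subseteq> {..<n}" "0 < card F" and "0 \<le> t0" "8 \<le> q * real (card F)"
    and missed: "real (card {i\<in>F. X i < t0}) \<le> real (card F) / 2"
    and negatives: "real (card {i\<in>{..<n}. X i \<le> - t0}) \<le> q * real (card F) / 4"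
    and nulls: "\<And>t. 0 \<le> t \<Longrightarrow>
      real (card {i\<in>{..<n} - F. t \<le> X i}) \<le> 2 * real (card {i\<in>{..<n} - F. X i \<le> - t}) + e"
    and "0 \<le> e"
  shows "FDP (BC_rej n q X) F \<le> 2 * q + 2 * e / real (card F)"
    and "FNP (BC_rej n q X) F \<le> real (card {i\<in>F. X i < t0}) / real (card F)"
proof -
  have "finite F"
    using F(1) finite_subset by blast
  have "0 < q * real (card F)"
    using \<open>8 \<le> q * real (card F)\<close> by simp
  then have "0 < q"
    by (simp add: zero_less_mult_iff)
  have "card F = card ({i\<in>F. t0 \<le> X i} \<union> {i\<in>F. X i < t0})"
    by (rule arg_cong[where f=card]) auto
  also have "\<dots> = card {i\<in>F. t0 \<le> X i} + card {i\<in>F. X i < t0}"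
    using \<open>finite F\<close> by (intro card_Un_disjoint) auto
  moreover have "card {i\<in>F. t0 \<le> X i} \<le> card {i\<in>{..<n}. t0 \<le> X i}"
    using F(1) by (intro card_mono) auto
  ultimately have many_pos: "real (card F) \<le> 2 * real (card {i\<in>{..<n}. t0 \<le> X i})"
    using missed by linarith
  then have "1 + real (card {i\<in>{..<n}. X i \<le> - t0}) \<le> q * real (card {i\<in>{..<n}. t0 \<le> X i})"
    using negatives \<open>8 \<le> q * real (card F)\<close> mult_left_mono[OF many_pos, of q] \<open>0 < q\<close> by linarith
  then obtain \<tau> where \<tau>: "0 \<le> \<tau>" "FDP_hat n X \<tau> \<le> q" "BC_rej n q X = {i\<in>{..<n}. \<tau> \<le> X i}"
    and rej: "{i\<in>{..<n}. t0 \<le> X i} \<subseteq> BC_rej n q X"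
    using BC_rej_threshold[OF \<open>0 \<le> t0\<close>] by blast
  show "FNP (BC_rej n q X) F \<le> real (card {i\<in>F. X i < t0}) / real (card F)"
    by (rule FNP_le_missed_signals[OF \<open>finite F\<close> F(1) rej])
  have "card {i\<in>{..<n}. t0 \<le> X i} \<le> card (BC_rej n q X)"
    using rej by (intro card_mono) (auto simp: \<tau>(3))
  then show "FDP (BC_rej n q X) F \<le> 2 * q + 2 * e / real (card F)"
    using many_pos nulls[OF \<tau>(1)] \<open>0 \<le> e\<close>
    by (intro FDP_le_of_null_counts[OF F \<tau>]) auto
qed

section \<open>The normal means model with a fixed signal set\<close>

lemma (in prob_space) expectation_le_on_good_event:
  fixes f g :: "'a \<Rightarrow> real"
  assumes "B \<in> events" "integrable M g"
    and "\<And>x. x \<in> space M \<Longrightarrow> 0 \<le> g x" "\<And>x. x \<in> space M \<Longrightarrow> f x \<le> 1"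
    and "\<And>x. x \<in> space M \<Longrightarrow> x \<notin> B \<Longrightarrow> f x \<le> g x"
  shows "expectation f \<le> expectation g + prob B"
proof (cases "integrable M f")
  case True
  have ind: "integrable M (indicator B :: 'a \<Rightarrow> real)"
    using assms(1) by (simp add: emeasure_eq_measure)
  have "expectation f \<le> expectation (\<lambda>x. g x + indicator B x)"
  proof (rule integral_mono[OF True Bochner_Integration.integrable_add[OF assms(2) ind]])
    fix x assume "x \<in> space M"
    then show "f x \<le> g x + indicator B x"
      using assms(3-5)[of x] by (cases "x \<in> B") auto
  qed
  also have "\<dots> = expectation g + prob B"
    using assms(1,2) ind by simp
  finally show ?thesis .
next
  case False
  then show ?thesis
    using assms(3) by (simp add: not_integrable_integral_eq integral_nonneg)
qed

text \<open>The grid \<open>u\<close> has null tail probabilities \<open>gauss_tail 0 * (2/3)^k\<close>; by symmetry of the null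
  distribution the counts above \<open>u k\<close> and below \<open>- u k\<close> have the same mean \<open>c k\<close>.\<close>
lemma normal_null_counts_balanced:
  fixes \<mu> :: "nat \<Rightarrow> real" and N :: "nat set"
  assumes "finite I" "N \<subseteq> I" "\<And>i. i \<in> N \<Longrightarrow> \<mu> i = 0"
    and "0 < d" "real (card N) * (2/3)^K \<le> 2 * d"
  defines "P \<equiv> \<Pi>\<^sub>M i\<in>I. normal_measure (\<mu> i)"
  obtains B where "B \<in> sets P" "measure P B \<le> 4 * (real K + 1) / d"
    "\<And>x t. x \<in> space P - B \<Longrightarrow> 0 \<le> t \<Longrightarrow>
       real (card {i\<in>N. t \<le> x i}) \<le> 2 * real (card {i\<in>N. x i \<le> - t}) + 4 * d"
proof -
  interpret finite_product_prob_space "\<lambda>i. normal_measure (\<mu> i)" I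
    by (rule finite_product_prob_space_normal[OF assms(1)])
  obtain u where "u 0 = 0" and u: "\<And>k. gauss_tail (u k) = gauss_tail 0 * (2/3)^k"
    using gauss_tail_geometric_grid by blast
  define c where "c k = real (card N) * (gauss_tail 0 * (2/3)^k)" for k
  have c: "0 \<le> c k" "c k \<le> 3/2 * c (Suc k)" for k
    unfolding c_def using gauss_tail_nonneg[of 0] by simp_all
  have "c K \<le> real (card N) * (2/3)^K"
    using mult_right_mono[OF gauss_tail_le_1[of 0], of "real (card N) * (2/3)^K"]
    by (simp add: c_def mult.left_commute)
  then have "c K \<le> 2 * d"
    using assms(5) by simp
  have mean_above: "(\<Sum>i\<in>N. measure (normal_measure (\<mu> i)) {u k..}) = c k" for k
    using assms(3) by (simp add: c_def measure_normal_measure_atLeast u)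
  have mean_below: "(\<Sum>i\<in>N. measure (normal_measure (\<mu> i)) {..- u k}) = c k" for k
    using assms(3) by (simp add: c_def measure_normal_measure_atMost u)
  obtain B1 where "B1 \<in> sets P" "measure P B1 \<le> 2 * (real K + 1) / d" and above:
    "\<And>x k. x \<in> space P \<Longrightarrow> x \<notin> B1 \<Longrightarrow> k \<le> K \<Longrightarrow> \<bar>real (card {i\<in>N. u k \<le> x i}) - c k\<bar> < c k / 8 + d"
    using counts_near_means[where A="\<lambda>k. {u k..}" and K=K, OF assms(2) _ \<open>0 < d\<close>,
        unfolded mean_above, folded P_def]
    by auto
  obtain B2 where "B2 \<in> sets P" "measure P B2 \<le> 2 * (real K + 1) / d" and below:
    "\<And>x k. x \<in> space P \<Longrightarrow> x \<notin> B2 \<Longrightarrow> k \<le> K \<Longrightarrow> \<bar>real (card {i\<in>N. x i \<le> - u k}) - c k\<bar> < c k / 8 + d"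
    using counts_near_means[where A="\<lambda>k. {..- u k}" and K=K, OF assms(2) _ \<open>0 < d\<close>,
        unfolded mean_below, folded P_def]
    by auto
  show ?thesis
  proof
    show "B1 \<union> B2 \<in> sets P"
      using \<open>B1 \<in> sets P\<close> \<open>B2 \<in> sets P\<close> by simp
    have "2 * (real K + 1) / d + 2 * (real K + 1) / d = 4 * (real K + 1) / d"
      by (simp add: field_simps)
    then show "measure P (B1 \<union> B2) \<le> 4 * (real K + 1) / d"
      using measure_Un_le[OF \<open>B1 \<in> sets P\<close> \<open>B2 \<in> sets P\<close>] \<open>measure P B1 \<le> _\<close> \<open>measure P B2 \<le> _\<close>
      by linarith
  next
    fix x and t :: real
    assume x: "x \<in> space P - (B1 \<union> B2)" and "0 \<le> t"
    have grid: "real (card {i\<in>N. u k \<le> x i}) \<le> 9/8 * c k + d"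
      "7/8 * c k - d \<le> real (card {i\<in>N. x i \<le> - u k})" if "k \<le> K" for k
      using above[of x k] below[of x k] x that by auto
    have "antimono (\<lambda>t. real (card {i\<in>N. t \<le> x i}))"
      and "antimono (\<lambda>t. real (card {i\<in>N. x i \<le> - t}))"
      using finite_subset[OF assms(2,1)] by (auto intro!: antimonoI card_mono)
    then show "real (card {i\<in>N. t \<le> x i}) \<le> 2 * real (card {i\<in>N. x i \<le> - t}) + 4 * d"
      by (rule antimono_grid_comparison[where u=u and c=c and K=K])
        (use grid c \<open>c K \<le> 2 * d\<close> \<open>u 0 = 0\<close> \<open>0 \<le> t\<close> \<open>0 < d\<close> in auto)
  qed
qed

text \<open>Coordinates in \<open>F\<close> have mean \<open>\<mu>1\<close> and the others mean \<open>0\<close>; \<open>K + 1\<close> is the number of grid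
  points used to compare null counts, and \<open>\<epsilon>\<close> is the resulting additive slack in the FDP bound.\<close>
context
  fixes n m K :: nat and F :: "nat set" and \<mu>1 t0 q \<epsilon> :: real
  assumes F: "F \<subseteq> {..<n}" "card F = m" "0 < m"
    and t0: "0 \<le> t0" "t0 \<le> \<mu>1"
    and signal_tail: "gauss_tail (\<mu>1 - t0) \<le> 1/4"
    and null_tail: "real n * gauss_tail t0 \<le> q * real m / 8"
    and qm: "8 \<le> q * real m"
    and \<epsilon>: "0 < \<epsilon>" "real n * (2/3)^K \<le> \<epsilon> * real m / 4"
begin

lemma expected_missed_signals_le:
  "(\<Sum>i\<in>F. measure (normal_measure (if i \<in> F then \<mu>1 else 0)) {..<t0}) \<le> real m * gauss_tail (\<mu>1 - t0)"
proof -
  have "(\<Sum>i\<in>F. measure (normal_measure (if i \<in> F then \<mu>1 else 0)) {..<t0}) \<le> (\<Sum>i\<in>F. gauss_tail (\<mu>1 - t0))"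
  proof (rule sum_mono)
    fix i assume "i \<in> F"
    interpret prob_space "normal_measure \<mu>1"
      by (rule prob_space_normal_measure)
    have "measure (normal_measure \<mu>1) {..<t0} \<le> measure (normal_measure \<mu>1) {..t0}"
      by (intro finite_measure_mono) auto
    then show "measure (normal_measure (if i \<in> F then \<mu>1 else 0)) {..<t0} \<le> gauss_tail (\<mu>1 - t0)"
      using \<open>i \<in> F\<close> by (simp add: measure_normal_measure_atMost)
  qed
  then show ?thesis
    using F(2) by simp
qed

lemma prob_many_missed_signals:
  defines "P \<equiv> \<Pi>\<^sub>M i\<in>{..<n}. normal_measure (if i \<in> F then \<mu>1 else 0)"
  shows "{x \<in> space P. real m / 2 \<le> real (card {i\<in>F. x i < t0})} \<in> sets P" (is "?S \<in> _")
    and "measure P {x \<in> space P. real m / 2 \<le> real (card {i\<in>F. x i < t0})}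
      \<le> 16 * gauss_tail (\<mu>1 - t0) / m"
proof -
  interpret finite_product_prob_space "\<lambda>i. normal_measure (if i \<in> F then \<mu>1 else 0)" "{..<n}"
    by (rule finite_product_prob_space_normal) simp
  have S: "?S = {x \<in> space P. 2 * (real m / 4) \<le> real (card {i\<in>F. x i \<in> {..<t0}})}"
    by simp
  show "?S \<in> sets P"
    unfolding S unfolding P_def using F(1) by (intro count_deviation_in_sets(2)) auto
  have "measure P ?S \<le> real m * gauss_tail (\<mu>1 - t0) / (real m / 4)\<^sup>2"
    unfolding S unfolding P_def using F(1,3) expected_missed_signals_le mult_left_mono[OF signal_tail, of "real m"]
    by (intro prob_count_ge) auto
  also have "\<dots> = 16 * gauss_tail (\<mu>1 - t0) / m"
    using F(3) by (simp add: power2_eq_square field_simps)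
  finally show "measure P ?S \<le> 16 * gauss_tail (\<mu>1 - t0) / m" .
qed

lemma prob_many_nulls_below:
  defines "P \<equiv> \<Pi>\<^sub>M i\<in>{..<n}. normal_measure (if i \<in> F then \<mu>1 else 0)"
  shows "{x \<in> space P. q * real m / 4 \<le> real (card {i\<in>{..<n}. x i \<le> - t0})} \<in> sets P"
      (is "?S \<in> _")
    and "measure P {x \<in> space P. q * real m / 4 \<le> real (card {i\<in>{..<n}. x i \<le> - t0})} \<le> 8 / (q * m)"
proof -
  interpret finite_product_prob_space "\<lambda>i. normal_measure (if i \<in> F then \<mu>1 else 0)" "{..<n}"
    by (rule finite_product_prob_space_normal) simp
  have S: "?S = {x \<in> space P. 2 * (q * real m / 8) \<le> real (card {i\<in>{..<n}. x i \<in> {..- t0}})}"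
    by simp
  show "?S \<in> sets P"
    unfolding S unfolding P_def by (intro count_deviation_in_sets(2)) auto
  have "(\<Sum>i<n. measure (normal_measure (if i \<in> F then \<mu>1 else 0)) {..- t0}) \<le> (\<Sum>i<n. gauss_tail t0)"
    using t0 by (intro sum_mono) (simp add: measure_normal_measure_atMost antimonoD[OF gauss_tail_antimono])
  then have "measure P ?S \<le> (q * real m / 8) / (q * real m / 8)\<^sup>2"
    unfolding S unfolding P_def using null_tail qm by (intro prob_count_ge) auto
  also have "\<dots> = 8 / (q * m)"
    using qm by (simp add: power2_eq_square field_simps)
  finally show "measure P ?S \<le> 8 / (q * m)" .
qed

lemma null_counts_balanced_event:
  defines "P \<equiv> \<Pi>\<^sub>M i\<in>{..<n}. normal_measure (if i \<in> F then \<mu>1 else 0)"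
  obtains B where "B \<in> sets P" "measure P B \<le> 32 * (real K + 1) / (\<epsilon> * m)"
    "\<And>x t. x \<in> space P - B \<Longrightarrow> 0 \<le> t \<Longrightarrow>
      real (card {i\<in>{..<n} - F. t \<le> x i}) \<le> 2 * real (card {i\<in>{..<n} - F. x i \<le> - t}) + \<epsilon> * m / 2"
proof -
  have "4 * (real K + 1) / (\<epsilon> * real m / 8) = 32 * (real K + 1) / (\<epsilon> * m)"
    and "4 * (\<epsilon> * real m / 8) = \<epsilon> * m / 2"
    by (simp_all add: field_simps)
  note that' = that[unfolded this[symmetric]]
  show ?thesis
  proof (rule normal_null_counts_balanced[of "{..<n}" "{..<n} - F" "\<lambda>i. if i \<in> F then \<mu>1 else 0"
        "\<epsilon> * real m / 8" K, folded P_def])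
    have "real (card ({..<n} - F)) \<le> real n"
      using card_mono[of "{..<n}" "{..<n} - F"] by simp
    then have "real (card ({..<n} - F)) * (2/3)^K \<le> real n * (2/3)^K"
      by (rule mult_right_mono) simp
    then show "real (card ({..<n} - F)) * (2/3)^K \<le> 2 * (\<epsilon> * real m / 8)"
      using \<epsilon>(2) by linarith
  qed (use \<epsilon> F(3) that' in auto)
qed

lemma normal_signal_model_good_event:
  defines "P \<equiv> \<Pi>\<^sub>M i\<in>{..<n}. normal_measure (if i \<in> F then \<mu>1 else 0)"
  obtains B where "B \<in> sets P"
    "measure P B \<le> 16 * gauss_tail (\<mu>1 - t0) / m + 8 / (q * m) + 32 * (real K + 1) / (\<epsilon> * m)"
    "\<And>x. x \<in> space P - B \<Longrightarrow> FDP (BC_rej n q x) F \<le> 2 * q + \<epsilon>"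
    "\<And>x. x \<in> space P - B \<Longrightarrow> FNP (BC_rej n q x) F \<le> real (card {i\<in>F. x i < t0}) / m"
proof -
  define missed where "missed = {x \<in> space P. real m / 2 \<le> real (card {i\<in>F. x i < t0})}"
  define negatives where "negatives = {x \<in> space P. q * real m / 4 \<le> real (card {i\<in>{..<n}. x i \<le> - t0})}"
  note missed = prob_many_missed_signals[folded P_def, folded missed_def]
  note negatives = prob_many_nulls_below[folded P_def, folded negatives_def]
  obtain B_null where "B_null \<in> sets P"
    and P_null: "measure P B_null \<le> 32 * (real K + 1) / (\<epsilon> * m)"
    and nulls: "\<And>x t. x \<in> space P - B_null \<Longrightarrow> 0 \<le> t \<Longrightarrow>
      real (card {i\<in>{..<n} - F. t \<le> x i}) \<le> 2 * real (card {i\<in>{..<n} - F. x i \<le> - t}) + \<epsilon> * m / 2"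
    using null_counts_balanced_event unfolding P_def by blast
  show ?thesis
  proof
    show "missed \<union> negatives \<union> B_null \<in> sets P"
      using missed(1) negatives(1) \<open>B_null \<in> sets P\<close> by simp
    have "measure P (missed \<union> negatives \<union> B_null)
        \<le> measure P missed + measure P negatives + measure P B_null"
      using missed(1) negatives(1) \<open>B_null \<in> sets P\<close>
      by (intro order_trans[OF measure_Un_le] add_mono measure_Un_le) auto
    then show "measure P (missed \<union> negatives \<union> B_null)
        \<le> 16 * gauss_tail (\<mu>1 - t0) / m + 8 / (q * m) + 32 * (real K + 1) / (\<epsilon> * m)"
      using missed(2) negatives(2) P_null by linarith
  next
    fix x
    assume x: "x \<in> space P - (missed \<union> negatives \<union> B_null)"
    have "real (card {i\<in>F. x i < t0}) \<le> real (card F) / 2"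
      and "real (card {i\<in>{..<n}. x i \<le> - t0}) \<le> q * real (card F) / 4"
      using x F(2) unfolding missed_def negatives_def by auto
    moreover have "x \<in> space P - B_null"
      using x by auto
    moreover have "0 < card F" "8 \<le> q * real (card F)"
      using F qm by auto
    ultimately have bounds:
      "FDP (BC_rej n q x) F \<le> 2 * q + 2 * (\<epsilon> * m / 2) / real (card F)"
      "FNP (BC_rej n q x) F \<le> real (card {i\<in>F. x i < t0}) / real (card F)"
      using BC_FDP_FNP_le_of_counts[OF F(1) _ t0(1) _ _ _ nulls] \<epsilon> F(3) by auto
    show "FDP (BC_rej n q x) F \<le> 2 * q + \<epsilon>"
      using bounds(1) F(2,3) by simp
    show "FNP (BC_rej n q x) F \<le> real (card {i\<in>F. x i < t0}) / m"
      using bounds(2) F(2) by simp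
  qed
qed

lemma normal_signal_model_expected_FDP_FNP:
  defines "P \<equiv> \<Pi>\<^sub>M i\<in>{..<n}. normal_measure (if i \<in> F then \<mu>1 else 0)"
    and "bad \<equiv> 16 * gauss_tail (\<mu>1 - t0) / m + 8 / (q * m) + 32 * (real K + 1) / (\<epsilon> * m)"
  shows "(\<integral>x. FDP (BC_rej n q x) F \<partial>P) \<le> 2 * q + \<epsilon> + bad"
    and "(\<integral>x. FNP (BC_rej n q x) F \<partial>P) \<le> gauss_tail (\<mu>1 - t0) + bad"
proof -
  let ?\<mu> = "\<lambda>i. if i \<in> F then \<mu>1 else 0"
  interpret finite_product_prob_space "\<lambda>i. normal_measure (?\<mu> i)" "{..<n}"
    by (rule finite_product_prob_space_normal) simp
  obtain B where B: "B \<in> sets P" "measure P B \<le> bad"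
    and FDP: "\<And>x. x \<in> space P - B \<Longrightarrow> FDP (BC_rej n q x) F \<le> 2 * q + \<epsilon>"
    and FNP: "\<And>x. x \<in> space P - B \<Longrightarrow> FNP (BC_rej n q x) F \<le> real (card {i\<in>F. x i < t0}) / m"
    using normal_signal_model_good_event unfolding P_def bad_def by blast
  have "0 < q * real m"
    using qm by simp
  then have "0 \<le> q"
    by (simp add: zero_less_mult_iff)
  have "finite F"
    using F(1) finite_subset by blast
  have "(\<integral>x. FDP (BC_rej n q x) F \<partial>P) \<le> (\<integral>x. 2 * q + \<epsilon> \<partial>P) + measure P B"
    unfolding P_def using B[unfolded P_def] FDP[unfolded P_def] \<epsilon> \<open>0 \<le> q\<close>
    by (intro expectation_le_on_good_event) (auto simp: FDP_le_1 finite_BC_rej)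
  then show "(\<integral>x. FDP (BC_rej n q x) F \<partial>P) \<le> 2 * q + \<epsilon> + bad"
    using B unfolding P_def by (simp add: P.prob_space)
  have missed_meas: "(\<lambda>x. real (card {i\<in>F. x i \<in> {..<t0}}) / m) \<in> borel_measurable P"
    unfolding P_def using F(1) by (intro borel_measurable_divide borel_measurable_count) auto
  have "(\<integral>x. FNP (BC_rej n q x) F \<partial>P) \<le> (\<integral>x. real (card {i\<in>F. x i \<in> {..<t0}}) / m \<partial>P) + measure P B"
    unfolding P_def using B[unfolded P_def] FNP[unfolded P_def] F \<open>finite F\<close> missed_meas[unfolded P_def]
    by (intro expectation_le_on_good_event integrable_const_bound[where B=1])
      (auto simp: FNP_le_1 card_mono)
  also have "(\<integral>x. real (card {i\<in>F. x i \<in> {..<t0}}) / m \<partial>P)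
      = (\<Sum>i\<in>F. measure (normal_measure (?\<mu> i)) {..<t0}) / m"
    using expectation_count[of F "\<lambda>_. {..<t0}"] F(1) unfolding P_def by simp
  also have "\<dots> \<le> gauss_tail (\<mu>1 - t0)"
    using expected_missed_signals_le F(3) by (simp add: divide_simps mult.commute)
  finally show "(\<integral>x. FNP (BC_rej n q x) F \<partial>P) \<le> gauss_tail (\<mu>1 - t0) + bad"
    using B by simp
qed

end

section \<open>Asymptotics\<close>

lemma n_signals_le:
  assumes "0 \<le> \<beta>"
  shows "n_signals \<beta> n \<le> n"
proof (cases "n = 0")
  case False
  then have "real n powr (1 - \<beta>) \<le> real n powr 1"
    using assms by (intro powr_mono) auto
  then show ?thesis
    using False by (simp add: n_signals_def nat_le_iff floor_le_iff)
qed (simp add: n_signals_def)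

lemma finite_signal_sets: "finite (signal_sets \<beta> n)"
  unfolding signal_sets_def by (rule finite_subset[of _ "Pow {..<n}"]) auto

lemma signal_sets_nonempty: "0 \<le> \<beta> \<Longrightarrow> signal_sets \<beta> n \<noteq> {}"
  using n_signals_le[of \<beta> n] unfolding signal_sets_def by (auto intro!: exI[of _ "{..<n_signals \<beta> n}"])

lemma expectation_pmf_of_set_le:
  fixes f :: "'a \<Rightarrow> real"
  assumes "finite S" "S \<noteq> {}" "\<And>x. x \<in> S \<Longrightarrow> f x \<le> b"
  shows "measure_pmf.expectation (pmf_of_set S) f \<le> b"
proof -
  have "measure_pmf.expectation (pmf_of_set S) f = sum f S / card S"
    using assms(1,2) by (simp add: integral_pmf_of_set)
  also have "\<dots> \<le> (\<Sum>x\<in>S. b) / card S"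
    using assms by (intro divide_right_mono sum_mono) auto
  also have "\<dots> = b"
    using assms(1,2) by simp
  finally show ?thesis .
qed

lemma FDR_BC_nonneg: "0 \<le> \<beta> \<Longrightarrow> 0 \<le> FDR_BC \<beta> r n q"
  unfolding FDR_BC_def using finite_signal_sets signal_sets_nonempty
  by (simp add: integral_pmf_of_set) (intro divide_nonneg_nonneg sum_nonneg integral_nonneg; simp add: FDP_def)

lemma FNR_BC_nonneg: "0 \<le> \<beta> \<Longrightarrow> 0 \<le> FNR_BC \<beta> r n q"
  unfolding FNR_BC_def using finite_signal_sets signal_sets_nonempty
  by (simp add: integral_pmf_of_set) (intro divide_nonneg_nonneg sum_nonneg integral_nonneg; simp add: FNP_def)

lemma BC_FDR_FNR_le:
  fixes \<beta> r q t \<epsilon> :: real and n K :: nat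
  defines "m \<equiv> n_signals \<beta> n" and "\<mu>1 \<equiv> sqrt (2 * r * ln n)"
  defines "bad \<equiv> 16 * gauss_tail (\<mu>1 - t) / m + 8 / (q * m) + 32 * (real K + 1) / (\<epsilon> * m)"
  assumes "0 \<le> \<beta>" "0 < m" "0 \<le> t" "t \<le> \<mu>1"
    and "gauss_tail (\<mu>1 - t) \<le> 1/4" "real n * gauss_tail t \<le> q * real m / 8" "8 \<le> q * real m"
    and "0 < \<epsilon>" "real n * (2/3)^K \<le> \<epsilon> * real m / 4"
  shows "FDR_BC \<beta> r n q + FNR_BC \<beta> r n q \<le> 2 * q + \<epsilon> + gauss_tail (\<mu>1 - t) + 2 * bad"
proof -
  have law: "X_law r n F = (\<Pi>\<^sub>M i\<in>{..<n}. normal_measure (if i \<in> F then \<mu>1 else 0))" for F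
    unfolding X_law_def means_def \<mu>1_def by (simp add: if_distrib)
  have "F \<subseteq> {..<n}" "card F = m" if "F \<in> signal_sets \<beta> n" for F
    using that unfolding signal_sets_def m_def by auto
  note bounds = normal_signal_model_expected_FDP_FNP[OF this assms(5-12), folded law bad_def]
  have "FDR_BC \<beta> r n q \<le> 2 * q + \<epsilon> + bad"
    unfolding FDR_BC_def using bounds(1) assms(4)
    by (intro expectation_pmf_of_set_le finite_signal_sets signal_sets_nonempty)
  moreover have "FNR_BC \<beta> r n q \<le> gauss_tail (\<mu>1 - t) + bad"
    unfolding FNR_BC_def using bounds(2) assms(4)
    by (intro expectation_pmf_of_set_le finite_signal_sets signal_sets_nonempty)
  ultimately show ?thesis
    by simp
qed

lemma gauss_tail_null_threshold:
  assumes "0 \<le> s" "1 \<le> real n" "16 \<le> q * real n powr (s - \<beta>)"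
  shows "real n * gauss_tail (sqrt (2 * s * ln n)) \<le> q * real n powr (1 - \<beta>) / 16"
proof -
  have "real n * gauss_tail (sqrt (2 * s * ln n)) \<le> real n powr 1 * real n powr - s"
    using gauss_tail_sqrt_ln_le[of s n] assms(1,2) by simp
  also have "\<dots> = real n powr (1 - s)"
    using assms(2) by (simp add: powr_diff powr_minus divide_inverse)
  finally have "real n * gauss_tail (sqrt (2 * s * ln n)) * 16 \<le> real n powr (1 - s) * (q * real n powr (s - \<beta>))"
    using assms(3) by (intro mult_mono) (auto simp: gauss_tail_nonneg)
  also have "\<dots> = q * real n powr (1 - \<beta>)"
    by (simp add: powr_add[symmetric] mult.left_commute)
  finally show ?thesis
    by linarith
qed

lemma gauss_tail_sqrt_ln_gap_le:
  assumes "0 \<le> s" "s \<le> r" "1 \<le> x"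
  shows "gauss_tail (sqrt (2 * r * ln x) - sqrt (2 * s * ln x)) \<le> x powr - (sqrt r - sqrt s)\<^sup>2"
proof -
  have "sqrt (2 * r * ln x) - sqrt (2 * s * ln x) = (sqrt r - sqrt s) * sqrt (2 * ln x)"
    by (simp add: real_sqrt_mult algebra_simps)
  also have "\<dots> = sqrt (2 * (sqrt r - sqrt s)\<^sup>2 * ln x)"
    using assms by (simp add: real_sqrt_mult mult.commute)
  finally show ?thesis
    using assms gauss_tail_sqrt_ln_le[of "(sqrt r - sqrt s)\<^sup>2" x] by simp
qed

lemma geometric_index:
  assumes "1 \<le> x"
  obtains K :: nat where "x * (2/3)^K \<le> 1" "real K + 1 \<le> ln x / ln (3/2) + 2"
proof -
  define K where "K = nat \<lceil>ln x / ln (3/2)\<rceil>"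
  have "0 \<le> ln x / ln (3/2)"
    using assms by simp
  then have K: "real K = of_int \<lceil>ln x / ln (3/2)\<rceil>"
    unfolding K_def by simp
  have "ln x \<le> real K * ln (3/2)"
    unfolding K by (simp add: pos_divide_le_eq[symmetric])
  have "x = exp (ln x)"
    using assms by simp
  also have "\<dots> \<le> exp (real K * ln (3/2))"
    using \<open>ln x \<le> real K * ln (3/2)\<close> by simp
  also have "\<dots> = (3/2)^K"
    by (simp add: exp_of_nat_mult)
  finally have "x * (2/3)^K \<le> (3/2)^K * (2/3)^K"
    by (rule mult_right_mono) simp
  also have "\<dots> = 1"
    by (simp add: power_mult_distrib[symmetric])
  finally have "x * (2/3)^K \<le> 1" .
  moreover have "real K + 1 \<le> ln x / ln (3/2) + 2"
    using ceiling_correct[of "ln x / ln (3/2)"] unfolding K by linarith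
  ultimately show ?thesis
    by (rule that)
qed

lemma n_signals_ge_half:
  assumes "2 \<le> real n powr (1 - \<beta>)"
  shows "real n powr (1 - \<beta>) / 2 \<le> real (n_signals \<beta> n)"
proof -
  have "real n powr (1 - \<beta>) - 1 \<le> real (n_signals \<beta> n)"
    unfolding n_signals_def using assms by linarith
  then show ?thesis
    using assms by linarith
qed

definition BC_risk_bound :: "real \<Rightarrow> real \<Rightarrow> real \<Rightarrow> real \<Rightarrow> nat \<Rightarrow> real" where
  "BC_risk_bound \<beta> c q \<epsilon> n = 2 * q + \<epsilon> + 33 * real n powr - c + 32 / (q * real n powr (1 - \<beta>))
     + 128 * (ln (real n) / ln (3/2) + 2) / (\<epsilon> * real n powr (1 - \<beta>))"

lemma BC_error_terms_le:
  fixes x q \<epsilon> g p L :: real and m K :: nat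
  assumes "x / 2 \<le> real m" "2 \<le> x" "0 < q" "0 < \<epsilon>" "0 \<le> g" "g \<le> p" "real K + 1 \<le> L"
  shows "16 * g / m + 8 / (q * m) + 32 * (real K + 1) / (\<epsilon> * m)
    \<le> 16 * p + 16 / (q * x) + 64 * L / (\<epsilon> * x)"
proof -
  have "1 \<le> real m"
    using assms(1,2) by simp
  then have "g \<le> p * real m"
    using assms(5,6) mult_left_mono[of 1 "real m" p] by simp
  then have "16 * g / m \<le> 16 * p"
    using \<open>1 \<le> real m\<close> by (simp add: divide_le_eq)
  moreover have "8 / (q * m) \<le> 8 / (q * x / 2)"
    using assms(1-3) by (intro frac_le) auto
  moreover have "32 * (real K + 1) / (\<epsilon> * m) \<le> 32 * L / (\<epsilon> * x / 2)"
    using assms(1,2,4,7) by (intro frac_le) auto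
  ultimately have "16 * g / m + 8 / (q * m) + 32 * (real K + 1) / (\<epsilon> * m)
      \<le> 16 * p + 8 / (q * x / 2) + 32 * L / (\<epsilon> * x / 2)"
    by (intro add_mono)
  also have "\<dots> = 16 * p + 16 / (q * x) + 64 * L / (\<epsilon> * x)"
    by simp
  finally show ?thesis .
qed

lemma BC_risk_le:
  fixes \<beta> r s q \<epsilon> :: real and n :: nat
  assumes "0 \<le> \<beta>" "0 < s" "s \<le> r" "0 < \<epsilon>"
    and "2 \<le> real n powr (1 - \<beta>)"
    and "real n powr - (sqrt r - sqrt s)\<^sup>2 \<le> 1/4"
    and "16 \<le> q * real n powr (1 - \<beta>)" "16 \<le> q * real n powr (s - \<beta>)"
    and "8 \<le> \<epsilon> * real n powr (1 - \<beta>)"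
  shows "FDR_BC \<beta> r n q + FNR_BC \<beta> r n q \<le> BC_risk_bound \<beta> ((sqrt r - sqrt s)\<^sup>2) q \<epsilon> n"
proof -
  define x where "x = real n powr (1 - \<beta>)"
  define m where "m = n_signals \<beta> n"
  define \<mu>1 where "\<mu>1 = sqrt (2 * r * ln n)"
  define t0 where "t0 = sqrt (2 * s * ln n)"
  define p where "p = real n powr - (sqrt r - sqrt s)\<^sup>2"
  have "1 \<le> real n"
    using assms(5) by (cases "n \<le> 1") (auto simp: le_Suc_eq)
  have "x / 2 \<le> real m" "2 \<le> x"
    using n_signals_ge_half[OF assms(5)] assms(5) unfolding x_def m_def by simp_all
  then have "0 < m"
    by simp
  have "0 < q * x"
    using assms(7) unfolding x_def by linarith
  then have "0 < q"
    using \<open>2 \<le> x\<close> by (simp add: zero_less_mult_iff)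
  have qm: "q * x \<le> 2 * (q * real m)"
    using mult_left_mono[OF \<open>x / 2 \<le> real m\<close>, of q] \<open>0 < q\<close> by simp
  have \<epsilon>m: "\<epsilon> * x \<le> 2 * (\<epsilon> * real m)"
    using mult_left_mono[OF \<open>x / 2 \<le> real m\<close>, of \<epsilon>] \<open>0 < \<epsilon>\<close> by simp
  have "0 \<le> t0" "t0 \<le> \<mu>1"
    unfolding t0_def \<mu>1_def using assms(2,3) \<open>1 \<le> real n\<close> by (auto intro!: mult_right_mono)
  have signal_tail: "gauss_tail (\<mu>1 - t0) \<le> p"
    unfolding \<mu>1_def t0_def p_def using assms(2,3) \<open>1 \<le> real n\<close> by (intro gauss_tail_sqrt_ln_gap_le) auto
  have null_tail: "real n * gauss_tail t0 \<le> q * real m / 8"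
    using gauss_tail_null_threshold[OF _ \<open>1 \<le> real n\<close> assms(8)] assms(2) qm
    unfolding t0_def x_def by linarith
  obtain K where "real n * (2/3)^K \<le> 1" and K: "real K + 1 \<le> ln n / ln (3/2) + 2"
    using geometric_index[OF \<open>1 \<le> real n\<close>] by blast
  then have "real n * (2/3)^K \<le> \<epsilon> * real m / 4"
    using assms(9) \<epsilon>m unfolding x_def by simp
  moreover have "gauss_tail (\<mu>1 - t0) \<le> 1/4" "8 \<le> q * real m"
    using signal_tail assms(6,7) qm unfolding p_def x_def by simp_all
  ultimately have "FDR_BC \<beta> r n q + FNR_BC \<beta> r n q \<le> 2 * q + \<epsilon> + gauss_tail (\<mu>1 - t0)
      + 2 * (16 * gauss_tail (\<mu>1 - t0) / m + 8 / (q * m) + 32 * (real K + 1) / (\<epsilon> * m))"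
    using \<open>0 < m\<close> \<open>0 \<le> t0\<close> \<open>t0 \<le> \<mu>1\<close> null_tail assms(1,4)
    by (intro BC_FDR_FNR_le[where \<beta>=\<beta> and n=n and r=r and q=q and \<epsilon>=\<epsilon> and t=t0 and K=K,
          folded m_def \<mu>1_def])
  also have "\<dots> \<le> 2 * q + \<epsilon> + p + 2 * (16 * p + 16 / (q * x) + 64 * (ln n / ln (3/2) + 2) / (\<epsilon> * x))"
    using signal_tail BC_error_terms_le[OF \<open>x / 2 \<le> real m\<close> \<open>2 \<le> x\<close> \<open>0 < q\<close> \<open>0 < \<epsilon>\<close>
        gauss_tail_nonneg signal_tail K]
    by (intro add_mono[OF add_mono[OF order_refl]] mult_left_mono) auto
  also have "\<dots> = BC_risk_bound \<beta> ((sqrt r - sqrt s)\<^sup>2) q \<epsilon> n"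
    unfolding BC_risk_bound_def x_def p_def by (simp add: field_simps)
  finally show ?thesis .
qed

lemma BC_risk_bound_tendsto_zero:
  fixes \<beta> c :: real and q :: "nat \<Rightarrow> real"
  assumes "\<beta> < 1" "0 < c" "q \<longlonglongrightarrow> 0"
    and "filterlim (\<lambda>n. real n powr (1 - \<beta>) * q n) at_top sequentially"
  shows "(\<lambda>n. BC_risk_bound \<beta> c (q n) (real n powr (- (1 - \<beta>) / 2)) n) \<longlonglongrightarrow> 0"
proof -
  have "(\<lambda>n. 2 * q n) \<longlonglongrightarrow> 0"
    using tendsto_mult_right_zero[OF assms(3)] .
  moreover have "(\<lambda>n::nat. real n powr (- (1 - \<beta>) / 2)) \<longlonglongrightarrow> 0"
    using assms(1) by real_asymp
  moreover have "(\<lambda>n::nat. 33 * real n powr - c) \<longlonglongrightarrow> 0"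
    using assms(2) by real_asymp
  moreover have "(\<lambda>n. 32 / (q n * real n powr (1 - \<beta>))) \<longlonglongrightarrow> 0"
    using tendsto_mult_right_zero[OF tendsto_inverse_0_at_top[OF assms(4)], of 32]
    by (simp add: divide_inverse mult.commute)
  moreover have "(\<lambda>n::nat. 128 * (ln (real n) / ln (3/2) + 2)
      / (real n powr (- (1 - \<beta>) / 2) * real n powr (1 - \<beta>))) \<longlonglongrightarrow> 0"
    using assms(1) by real_asymp
  ultimately show ?thesis
    unfolding BC_risk_bound_def by (intro tendsto_add_zero)
qed

text \<open>The choice \<open>\<epsilon> = n powr (- (1 - \<beta>) / 2)\<close> tends to \<open>0\<close> slowly enough that the union bound over
  the \<open>O(log n)\<close> grid points, of order \<open>log n / (\<epsilon> * n powr (1 - \<beta>))\<close>, still vanishes.\<close>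
lemma BC_risk_eventually_le:
  fixes \<beta> r s :: real and q :: "nat \<Rightarrow> real"
  assumes "0 < \<beta>" "\<beta> < s" "s < r" "\<beta> < 1"
    and "\<And>a. a > 0 \<Longrightarrow> filterlim (\<lambda>n. real n powr a * q n) at_top sequentially"
  shows "eventually (\<lambda>n. FDR_BC \<beta> r n (q n) + FNR_BC \<beta> r n (q n)
    \<le> BC_risk_bound \<beta> ((sqrt r - sqrt s)\<^sup>2) (q n) (real n powr (- (1 - \<beta>) / 2)) n) sequentially"
proof -
  have "0 < (sqrt r - sqrt s)\<^sup>2"
    using assms(3) by simp
  have "eventually (\<lambda>n. 16 \<le> q n * real n powr a) sequentially" if "0 < a" for a
    using assms(5)[OF that] unfolding filterlim_at_top by (auto simp: mult.commute)
  then have "eventually (\<lambda>n. 16 \<le> q n * real n powr (1 - \<beta>)) sequentially"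
    and "eventually (\<lambda>n. 16 \<le> q n * real n powr (s - \<beta>)) sequentially"
    using assms(2,4) by simp_all
  moreover have "eventually (\<lambda>n::nat. 2 \<le> real n powr (1 - \<beta>)) sequentially"
    and "eventually (\<lambda>n::nat. real n powr - (sqrt r - sqrt s)\<^sup>2 \<le> 1/4) sequentially"
    and "eventually (\<lambda>n::nat. 8 \<le> real n powr ((1 - \<beta>) / 2)) sequentially"
    using assms(4) \<open>0 < (sqrt r - sqrt s)\<^sup>2\<close> by real_asymp+
  ultimately show ?thesis
  proof eventually_elim
    case (elim n)
    have "real n powr (- (1 - \<beta>) / 2) * real n powr (1 - \<beta>) = real n powr ((1 - \<beta>) / 2)"
      by (subst powr_add[symmetric]) (simp add: field_simps)
    moreover have "0 < n"
      using elim(3) by (cases "n = 0") auto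
    ultimately show ?case
      using elim assms(1-3) by (intro BC_risk_le) auto
  qed
qed

theorem corollary3:
  fixes \<beta> r :: real and q :: "nat \<Rightarrow> real"
  assumes "0 < \<beta>" "\<beta> < 1" "r > \<beta>"
    and "\<And>n. 0 < q n \<and> q n < 1"
    and "q \<longlonglongrightarrow> 0"
    and "\<And>a. a > 0 \<Longrightarrow> filterlim (\<lambda>n. real n powr a * q n) at_top sequentially"
  shows "(\<lambda>n. FDR_BC \<beta> r n (q n) + FNR_BC \<beta> r n (q n)) \<longlonglongrightarrow> 0"
proof -
  define s where "s = (\<beta> + r) / 2"
  have s: "\<beta> < s" "s < r"
    using assms(3) unfolding s_def by auto
  have "0 < 1 - \<beta>" "0 < (sqrt r - sqrt s)\<^sup>2"
    using assms(2) s by simp_all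
  have "eventually (\<lambda>n. 0 \<le> FDR_BC \<beta> r n (q n) + FNR_BC \<beta> r n (q n)) sequentially"
    using FDR_BC_nonneg FNR_BC_nonneg assms(1) by (simp add: add_nonneg_nonneg)
  then show ?thesis
    using BC_risk_eventually_le[OF assms(1) s assms(2,6)]
    by (rule tendsto_sandwich[OF _ _ tendsto_const BC_risk_bound_tendsto_zero])
      (use assms(2,5,6) \<open>0 < 1 - \<beta>\<close> \<open>0 < (sqrt r - sqrt s)\<^sup>2\<close> in auto)
qed

end
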